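(* Let $\{c_n\}_{n\in\mathbb Z}$ be complex numbers with $\{c_n\}_{n\ge0}\in NBVS$ and $\{c_n+c_{-n}\}_{n\ge0}\in NBVS$, and suppose $f(x)=\lim_{N\to\infty}\sum_{n=-N}^Nc_ne^{inx}$ exists for all $x$ and $f\in C_{2\pi}$. Then there is a constant $K$, depending only on these sequences, such that for all $m\ge1$ and all $x\in[0,\pi]$, $$\Big|\sum_{k=m}^\infty c_k\sin kx\Big|\le K\max_{k\ge m}k\big(|c_k|+|c_{-k}|\big)\quad\text{and}\quad\Big|\sum_{k=m}^\infty c_{-k}\sin kx\Big|\le K\max_{k\ge m}k\big(|c_k|+|c_{-k}|\big).$$
   Context: For $\theta_0\in[0,\pi/2)$ let $M(\theta_0)=\{z\in\mathbb C: |\arg z|\le\theta_0\}$ (with $0\in M(\theta_0)$). Write $\Delta c_n=c_n-c_{n+1}$. A complex sequence $\mathbf C=\{c_n\}$ belongs to $NBVS$ if there is $\theta_0\in[0,\pi/2)$ with $c_n\in M(\theta_0)$ for all $n\ge1$ and a constant $K(\mathbf C)>0$ such that $\sum_{n=m}^{2m}|\Delta c_n|\le K(\mathbf C)\big(|c_m|+|c_{2m}|\big)$ for all $m\ge1$. $C_{2\pi}$ denotes the continuous $2\pi$-periodic complex functions. *)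

theory Defs
  imports "HOL-Analysis.Analysis"
begin

definition sector :: "real \<Rightarrow> complex set" where
  "sector \<theta>0 = {z. z = 0 \<or> \<bar>Arg z\<bar> \<le> \<theta>0}"

text \<open>NBVS for a sequence indexed by naturals; conditions are imposed for n >= 1, m >= 1
  as in the definition; Delta c_n = c_n - c_(n+1).\<close>
definition NBVS :: "(nat \<Rightarrow> complex) \<Rightarrow> bool" where
  "NBVS c \<longleftrightarrow>
     (\<exists>\<theta>0. 0 \<le> \<theta>0 \<and> \<theta>0 < pi / 2 \<and> (\<forall>n\<ge>1. c n \<in> sector \<theta>0)) \<and>
     (\<exists>K>0. \<forall>m\<ge>1. (\<Sum>n=m..2*m. norm (c n - c (n + 1))) \<le> K * (norm (c m) + norm (c (2*m))))"

definition C2pi :: "(real \<Rightarrow> complex) set" where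
  "C2pi = {f. continuous_on UNIV f \<and> (\<forall>x. f (x + 2 * pi) = f x)}"

end

theory Submission
  imports Defs
begin

text \<open>For \<open>0 < x \<le> pi\<close> write \<open>sin (k x) = u k - u (k + 1)\<close> with
  \<open>u k = cos ((k - 1/2) x) / (2 sin (x/2))\<close>, so that \<open>\<bar>u k\<bar> \<le> 3/x\<close>. Summation by parts bounds a
  block \<open>\<Sum>k=p..<q. a k sin (k x)\<close> by \<open>3/x\<close> times the boundary terms plus the variation
  \<open>\<Sum>k\<ge>p. \<parallel>a k - a (k+1)\<parallel>\<close>. If \<open>k \<parallel>a k\<parallel> \<le> B\<close> for \<open>k \<ge> m\<close>, the dyadic variation condition of NBVS,
  summed over the blocks \<open>[2^j p, 2^(j+1) p]\<close>, makes this variation \<open>O(B/p)\<close>; so the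
  block is \<open>O(B/(x p))\<close>, which is \<open>O(B)\<close> once \<open>p \<ge> 1/x\<close> and gives the Cauchy criterion. The
  terms with \<open>m \<le> k < m + 1/x\<close> are handled by \<open>\<bar>sin (k x)\<bar> \<le> k x\<close> and contribute at most \<open>B\<close>.
  The coefficients \<open>c (-k)\<close> are treated as \<open>(c k + c (-k)) - c k\<close>, whence the second NBVS hypothesis.\<close>

lemma sin_ge_third:
  fixes y :: real
  assumes "0 \<le> y" "y \<le> pi / 2"
  shows "y / 3 \<le> sin y"
proof -
  have taylor: "\<bar>sin y - y\<bar> \<le> y ^ 3 / 6"
    using Maclaurin_sin_bound[of y 3] assms
    by (simp add: numeral_3_eq_3 sin_coeff_def fact_numeral)
  have "y \<le> 2"
    using assms pi_less_4 by linarith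
  then have "y * y \<le> 2 * 2"
    using assms by (intro mult_mono) auto
  then have "y ^ 3 \<le> 4 * y"
    using mult_right_mono[of "y * y" 4 y] assms by (simp add: power3_eq_cube)
  then show ?thesis
    using taylor by linarith
qed

lemma sin_eq_cos_half_diff:
  fixes x :: real
  assumes "sin (x / 2) \<noteq> 0"
  shows "sin (t * x) = (cos ((t - 1/2) * x) - cos ((t + 1/2) * x)) / (2 * sin (x / 2))"
proof -
  have "(t - 1/2) * x = t * x - x / 2" "(t + 1/2) * x = t * x + x / 2"
    by (simp_all add: algebra_simps)
  then have "2 * sin (x / 2) * sin (t * x) = cos ((t - 1/2) * x) - cos ((t + 1/2) * x)"
    by (simp add: cos_diff cos_add)
  with assms show ?thesis
    by (simp add: field_simps)
qed

lemma sum_scaleR_by_parts: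
  fixes a :: "nat \<Rightarrow> 'a::real_vector"
  assumes "p \<le> q"
  shows "(\<Sum>k=p..<q. (u k - u (k+1)) *\<^sub>R a k)
    = u p *\<^sub>R a p - u q *\<^sub>R a q + (\<Sum>k=p..<q. u (k+1) *\<^sub>R (a (k+1) - a k))"
  using assms
proof (induction q rule: dec_induct)
  case (step q)
  then show ?case
    by (simp add: algebra_simps)
qed simp

lemma norm_sum_scaleR_by_parts_le:
  fixes a :: "nat \<Rightarrow> 'a::real_normed_vector"
  assumes "p \<le> q" and u: "\<And>k. \<bar>u k\<bar> \<le> U"
  shows "norm (\<Sum>k=p..<q. (u k - u (k+1)) *\<^sub>R a k)
    \<le> U * (norm (a p) + norm (a q) + (\<Sum>k=p..<q. norm (a k - a (k+1))))"
proof -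
  have "norm (\<Sum>k=p..<q. u (k+1) *\<^sub>R (a (k+1) - a k)) \<le> (\<Sum>k=p..<q. U * norm (a k - a (k+1)))"
    using u by (intro sum_norm_le) (simp add: mult_right_mono norm_minus_commute)
  moreover have "norm (u p *\<^sub>R a p) \<le> U * norm (a p)" "norm (u q *\<^sub>R a q) \<le> U * norm (a q)"
    using u by (simp_all add: mult_right_mono)
  moreover have "norm (v - w + s) \<le> norm v + norm w + norm s" for v w s :: 'a
    using norm_triangle_ineq[of "v - w" s] norm_triangle_ineq4[of v w] by linarith
  ultimately show ?thesis
    unfolding sum_scaleR_by_parts[OF \<open>p \<le> q\<close>] sum_distrib_left distrib_left
    by (meson add_mono order_trans)
qed

lemma weighted_norm_bound_nonneg:
  fixes a :: "nat \<Rightarrow> 'a::real_normed_vector"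
  assumes "\<forall>k\<ge>m. real k * norm (a k) \<le> B"
  shows "0 \<le> B"
  by (rule order_trans[OF mult_nonneg_nonneg assms[rule_format, OF order_refl]]) simp_all

definition dyadic_variation_bounded :: "real \<Rightarrow> (nat \<Rightarrow> 'a::real_normed_vector) \<Rightarrow> bool" where
  "dyadic_variation_bounded K a \<longleftrightarrow>
     (\<forall>n\<ge>1. (\<Sum>j=n..2*n. norm (a j - a (j+1))) \<le> K * (norm (a n) + norm (a (2*n))))"

lemma variation_dyadic_le:
  fixes a :: "nat \<Rightarrow> 'a::real_normed_vector"
  assumes var: "dyadic_variation_bounded K a" and "0 \<le> K"
    and decay: "\<forall>k\<ge>N. real k * norm (a k) \<le> B" and "1 \<le> N"
  shows "(\<Sum>j=N..<2^J*N. norm (a j - a (j+1))) \<le> 3*K*B/N * (1 - 1/2^J)"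
proof (induction J)
  case (Suc J)
  define n where "n = 2^J*N"
  have n: "N \<le> n" "1 \<le> n"
    using \<open>1 \<le> N\<close> by (auto simp: n_def)
  have "norm (a n) \<le> B / n" "norm (a (2*n)) \<le> B / (2*n)"
    using decay[rule_format, of n] decay[rule_format, of "2*n"] n
    by (simp_all add: field_simps)
  then have "K * (norm (a n) + norm (a (2*n))) \<le> K * (B / n + B / (2*n))"
    using \<open>0 \<le> K\<close> by (intro mult_left_mono) auto
  moreover have "(\<Sum>j=n..<2*n. norm (a j - a (j+1))) \<le> (\<Sum>j=n..2*n. norm (a j - a (j+1)))"
    by (intro sum_mono2) auto
  moreover have "(\<Sum>j=n..2*n. norm (a j - a (j+1))) \<le> K * (norm (a n) + norm (a (2*n)))"
    using var n(2) unfolding dyadic_variation_bounded_def by blast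
  moreover have "K * (B / n + B / (2*n)) = 3*K*B / (2*n)"
    using n by (simp add: field_simps)
  ultimately have "(\<Sum>j=n..<2*n. norm (a j - a (j+1))) \<le> 3*K*B / (2*n)"
    by linarith
  moreover have "(\<Sum>j=N..<2^Suc J*N. norm (a j - a (j+1)))
      = (\<Sum>j=N..<n. norm (a j - a (j+1))) + (\<Sum>j=n..<2*n. norm (a j - a (j+1)))"
    using n by (simp add: n_def sum.atLeastLessThan_concat mult.assoc)
  ultimately have "(\<Sum>j=N..<2^Suc J*N. norm (a j - a (j+1))) \<le> 3*K*B/N * (1 - 1/2^J) + 3*K*B / (2*n)"
    using Suc.IH by (simp add: n_def)
  also have "\<dots> = 3*K*B/N * (1 - 1/2^Suc J)"
    using \<open>1 \<le> N\<close> by (simp add: n_def field_simps)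
  finally show ?case .
qed simp

lemma variation_tail_le:
  fixes a :: "nat \<Rightarrow> 'a::real_normed_vector"
  assumes var: "dyadic_variation_bounded K a" and "0 \<le> K"
    and decay: "\<forall>k\<ge>N. real k * norm (a k) \<le> B" and "1 \<le> N"
  shows "(\<Sum>j=N..<q. norm (a j - a (j+1))) \<le> 3*K*B/N"
proof -
  have "0 \<le> B"
    by (rule weighted_norm_bound_nonneg[OF decay])
  have "q \<le> 2^q"
    using less_exp[of q] by simp
  also have "\<dots> \<le> 2^q*N"
    using \<open>1 \<le> N\<close> by simp
  finally have "q \<le> 2^q*N" .
  then have "(\<Sum>j=N..<q. norm (a j - a (j+1))) \<le> (\<Sum>j=N..<2^q*N. norm (a j - a (j+1)))"
    by (intro sum_mono2) auto
  also have "\<dots> \<le> 3*K*B/N * (1 - 1/2^q)"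
    by (rule variation_dyadic_le[OF assms])
  also have "\<dots> \<le> 3*K*B/N"
    using \<open>0 \<le> K\<close> \<open>0 \<le> B\<close> by (intro mult_left_le) auto
  finally show ?thesis .
qed

lemma norm_sum_sin_scaleR_block_le:
  fixes a :: "nat \<Rightarrow> 'a::real_normed_vector"
  assumes var: "dyadic_variation_bounded K a" and "0 \<le> K"
    and decay: "\<forall>k\<ge>p. real k * norm (a k) \<le> B" and "1 \<le> p"
    and x: "0 < x" "x \<le> pi"
  shows "norm (\<Sum>k=p..<q. sin (real k * x) *\<^sub>R a k) \<le> 3 * (2 + 3*K) * B / (x * p)"
proof (cases "p \<le> q")
  case False
  with x \<open>0 \<le> K\<close> weighted_norm_bound_nonneg[OF decay] show ?thesis
    by simp
next
  case True
  have "0 \<le> B"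
    by (rule weighted_norm_bound_nonneg[OF decay])
  define u where "u k = cos ((real k - 1/2) * x) / (2 * sin (x / 2))" for k
  have sin_half: "x / 6 \<le> sin (x / 2)"
    using sin_ge_third[of "x / 2"] x by simp
  have u: "\<bar>u k\<bar> \<le> 3 / x" for k
  proof -
    have "\<bar>u k\<bar> \<le> 1 / (2 * sin (x / 2))"
      using sin_half x by (simp add: u_def abs_divide divide_right_mono)
    also have "\<dots> \<le> 1 / (2 * (x / 6))"
      using sin_half x by (intro divide_left_mono) auto
    finally show ?thesis
      by simp
  qed
  have "sin (x / 2) \<noteq> 0"
    using sin_half x by linarith
  have sin_u: "sin (real k * x) = u k - u (k + 1)" for k
  proof -
    have "real (k + 1) - 1/2 = real k + 1/2"
      by simp
    then show ?thesis
      by (simp only: u_def sin_eq_cos_half_diff[OF \<open>sin (x / 2) \<noteq> 0\<close>] diff_divide_distrib)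
  qed
  have "norm (\<Sum>k=p..<q. sin (real k * x) *\<^sub>R a k)
      \<le> 3 / x * (norm (a p) + norm (a q) + (\<Sum>k=p..<q. norm (a k - a (k+1))))"
    unfolding sin_u by (rule norm_sum_scaleR_by_parts_le[OF True u])
  also have "\<dots> \<le> 3 / x * (B / p + B / p + 3*K*B / p)"
  proof -
    have "norm (a p) \<le> B / p" "norm (a q) \<le> B / q"
      using decay[rule_format, of p] decay[rule_format, of q] True \<open>1 \<le> p\<close>
      by (simp_all add: field_simps)
    moreover have "B / q \<le> B / p"
      using True \<open>1 \<le> p\<close> \<open>0 \<le> B\<close> by (intro divide_left_mono) auto
    moreover have "(\<Sum>k=p..<q. norm (a k - a (k+1))) \<le> 3*K*B / p"
      by (rule variation_tail_le[OF var \<open>0 \<le> K\<close> decay \<open>1 \<le> p\<close>])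
    ultimately show ?thesis
      using x by (intro mult_left_mono) auto
  qed
  also have "\<dots> = 3 * (2 + 3*K) * B / (x * p)"
    using x \<open>1 \<le> p\<close> by (simp add: field_simps)
  finally show ?thesis .
qed

lemma norm_sum_sin_scaleR_le_linear:
  fixes a :: "nat \<Rightarrow> 'a::real_normed_vector"
  assumes decay: "\<forall>k\<ge>m. real k * norm (a k) \<le> B" and "0 \<le> x"
  shows "norm (\<Sum>k=m..<q. sin (real k * x) *\<^sub>R a k) \<le> real (q - m) * x * B"
proof -
  have "norm (sin (real k * x) *\<^sub>R a k) \<le> x * B" if "k \<in> {m..<q}" for k
  proof -
    have "norm (sin (real k * x) *\<^sub>R a k) \<le> (real k * x) * norm (a k)"
      using abs_sin_x_le_abs_x[of "real k * x"] \<open>0 \<le> x\<close> by (simp add: mult_right_mono)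
    also have "\<dots> = x * (real k * norm (a k))"
      by simp
    also have "\<dots> \<le> x * B"
      using decay that \<open>0 \<le> x\<close> by (simp add: mult_left_mono)
    finally show ?thesis .
  qed
  then have "norm (\<Sum>k=m..<q. sin (real k * x) *\<^sub>R a k) \<le> (\<Sum>k=m..<q. x * B)"
    by (rule sum_norm_le)
  then show ?thesis
    by simp
qed

lemma norm_sum_sin_scaleR_bounded:
  fixes a :: "nat \<Rightarrow> 'a::real_normed_vector"
  assumes var: "dyadic_variation_bounded K a" and "0 \<le> K"
    and decay: "\<forall>k\<ge>m. real k * norm (a k) \<le> B" and "1 \<le> m"
    and x: "0 < x" "x \<le> pi"
  shows "norm (\<Sum>k=m..<q. sin (real k * x) *\<^sub>R a k) \<le> (7 + 9*K) * B"
proof -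
  define N where "N = m + nat \<lfloor>1 / x\<rfloor>"
  define S where "S i j = (\<Sum>k=i..<j. sin (real k * x) *\<^sub>R a k)" for i j
  have "0 \<le> B"
    by (rule weighted_norm_bound_nonneg[OF decay])
  have "1 / x < real N"
    using \<open>1 \<le> m\<close> x by (simp add: N_def) linarith
  have split: "S m q = S m (min q N) + S N q"
    by (cases "q \<le> N") (simp_all add: S_def N_def sum.atLeastLessThan_concat)
  have "norm (S m (min q N)) \<le> real (min q N - m) * x * B"
    unfolding S_def by (rule norm_sum_sin_scaleR_le_linear[OF decay]) (use x in simp)
  also have "\<dots> \<le> 1 * B"
  proof (intro mult_right_mono)
    have "real (min q N - m) \<le> real (nat \<lfloor>1 / x\<rfloor>)"
      by (simp add: N_def)
    also have "\<dots> \<le> 1 / x"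
      using x by simp
    finally show "real (min q N - m) * x \<le> 1"
      using x by (simp add: field_simps)
  qed (rule \<open>0 \<le> B\<close>)
  finally have initial: "norm (S m (min q N)) \<le> B"
    by simp
  have "norm (S N q) \<le> 3 * (2 + 3*K) * B / (x * N)"
    unfolding S_def
    by (rule norm_sum_sin_scaleR_block_le[OF var \<open>0 \<le> K\<close> _ _ x]) (use decay \<open>1 \<le> m\<close> in \<open>auto simp: N_def\<close>)
  also have "\<dots> \<le> 3 * (2 + 3*K) * B / 1"
    using \<open>1 / x < real N\<close> x \<open>0 \<le> B\<close> \<open>0 \<le> K\<close>
    by (intro divide_left_mono) (simp_all add: field_simps)
  finally have block: "norm (S N q) \<le> 3 * (2 + 3*K) * B"
    by simp
  have "norm (S m q) \<le> norm (S m (min q N)) + norm (S N q)"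
    unfolding split by (rule norm_triangle_ineq)
  moreover have "(7 + 9*K) * B = B + 3 * (2 + 3*K) * B"
    by (simp add: algebra_simps)
  ultimately show ?thesis
    using initial block unfolding S_def by linarith
qed

lemma summable_sin_scaleR:
  fixes a :: "nat \<Rightarrow> 'a::banach"
  assumes var: "dyadic_variation_bounded K a" and "0 \<le> K"
    and decay: "\<forall>k\<ge>m. real k * norm (a k) \<le> B"
    and x: "0 \<le> x" "x \<le> pi"
  shows "summable (\<lambda>k. sin (real k * x) *\<^sub>R a k)"
proof (cases "x = 0")
  case False
  with x have "0 < x"
    by simp
  have "\<exists>P. \<forall>p\<ge>P. \<forall>q. norm (\<Sum>k=p..<q. sin (real k * x) *\<^sub>R a k) < e" if "0 < e" for e
  proof -
    define D where "D = 3 * (2 + 3*K) * B / x"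
    obtain N :: nat where "D / e < N"
      using reals_Archimedean2 by blast
    have "norm (\<Sum>k=p..<q. sin (real k * x) *\<^sub>R a k) < e" if "max (max 1 m) N \<le> p" for p q
    proof -
      have "norm (\<Sum>k=p..<q. sin (real k * x) *\<^sub>R a k) \<le> 3 * (2 + 3*K) * B / (x * p)"
        by (rule norm_sum_sin_scaleR_block_le[OF var \<open>0 \<le> K\<close> _ _ \<open>0 < x\<close> \<open>x \<le> pi\<close>])
          (use decay that in auto)
      also have "\<dots> = D / p"
        by (simp add: D_def)
      also have "\<dots> < e"
      proof -
        have "D < e * N"
          using \<open>D / e < N\<close> \<open>0 < e\<close> by (simp add: divide_less_eq mult.commute)
        also have "\<dots> \<le> e * p"
          using that \<open>0 < e\<close> by simp
        finally show ?thesis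
          using that by (simp add: divide_less_eq mult.commute)
      qed
      finally show ?thesis .
    qed
    then show ?thesis
      by blast
  qed
  then show ?thesis
    unfolding summable_Cauchy by blast
qed simp

lemma norm_suminf_sin_scaleR_tail_le:
  fixes a :: "nat \<Rightarrow> 'a::banach"
  assumes var: "dyadic_variation_bounded K a" and "0 \<le> K"
    and decay: "\<forall>k\<ge>m. real k * norm (a k) \<le> B" and "1 \<le> m"
    and x: "0 \<le> x" "x \<le> pi"
  shows "norm (\<Sum>k. sin (real (k + m) * x) *\<^sub>R a (k + m)) \<le> (7 + 9*K) * B"
proof (cases "x = 0")
  case True
  with \<open>0 \<le> K\<close> weighted_norm_bound_nonneg[OF decay] show ?thesis
    by simp
next
  case False
  with x have "0 < x"
    by simp
  have "summable (\<lambda>k. sin (real (k + m) * x) *\<^sub>R a (k + m))"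
    using summable_sin_scaleR[OF var \<open>0 \<le> K\<close> decay x]
      summable_iff_shift[of "\<lambda>k. sin (real k * x) *\<^sub>R a k" m] by simp
  then have "(\<lambda>n. norm (\<Sum>k<n. sin (real (k + m) * x) *\<^sub>R a (k + m)))
      \<longlonglongrightarrow> norm (\<Sum>k. sin (real (k + m) * x) *\<^sub>R a (k + m))"
    by (intro tendsto_norm summable_LIMSEQ)
  moreover have "norm (\<Sum>k<n. sin (real (k + m) * x) *\<^sub>R a (k + m)) \<le> (7 + 9*K) * B" for n
  proof -
    have "(\<Sum>k<n. sin (real (k + m) * x) *\<^sub>R a (k + m)) = (\<Sum>k=m..<n + m. sin (real k * x) *\<^sub>R a k)"
      using sum.shift_bounds_nat_ivl[of "\<lambda>k. sin (real k * x) *\<^sub>R a k" 0 m n]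
      by (simp add: atLeast0LessThan)
    then show ?thesis
      using norm_sum_sin_scaleR_bounded[OF var \<open>0 \<le> K\<close> decay \<open>1 \<le> m\<close> \<open>0 < x\<close> \<open>x \<le> pi\<close>]
      by simp
  qed
  ultimately show ?thesis
    by (intro LIMSEQ_le_const2) auto
qed

lemma NBVS_imp_dyadic_variation_bounded:
  assumes "NBVS c"
  shows "\<exists>K\<ge>0. dyadic_variation_bounded K c"
  using assms unfolding NBVS_def dyadic_variation_bounded_def by (auto intro: less_imp_le)

lemma sin_series_tails_le:
  fixes a b :: "nat \<Rightarrow> 'a::banach"
  assumes var_a: "dyadic_variation_bounded K1 a" "0 \<le> K1"
    and var_ab: "dyadic_variation_bounded K2 (\<lambda>n. a n + b n)" "0 \<le> K2"
    and bdd: "bdd_above ((\<lambda>k. real k * (norm (a k) + norm (b k))) ` {m..})" and "1 \<le> m"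
    and x: "0 \<le> x" "x \<le> pi"
  defines "B \<equiv> SUP k\<in>{m..}. real k * (norm (a k) + norm (b k))"
    and "C \<equiv> (7 + 9*K1) + (7 + 9*K2)"
  shows "summable (\<lambda>k. sin (real (k + m) * x) *\<^sub>R a (k + m)) \<and>
    norm (\<Sum>k. sin (real (k + m) * x) *\<^sub>R a (k + m)) \<le> C * B \<and>
    summable (\<lambda>k. sin (real (k + m) * x) *\<^sub>R b (k + m)) \<and>
    norm (\<Sum>k. sin (real (k + m) * x) *\<^sub>R b (k + m)) \<le> C * B"
proof -
  define s where "s k = sin (real (k + m) * x)" for k
  have decay: "\<forall>k\<ge>m. real k * (norm (a k) + norm (b k)) \<le> B"
    unfolding B_def using bdd by (auto intro: cSUP_upper)
  have decay_a: "\<forall>k\<ge>m. real k * norm (a k) \<le> B"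
  proof (intro allI impI)
    fix k
    assume "m \<le> k"
    have "real k * norm (a k) \<le> real k * (norm (a k) + norm (b k))"
      by (simp add: mult_left_mono)
    with decay \<open>m \<le> k\<close> show "real k * norm (a k) \<le> B"
      by force
  qed
  have decay_ab: "\<forall>k\<ge>m. real k * norm (a k + b k) \<le> B"
    using decay by (auto intro: order_trans[OF mult_left_mono[OF norm_triangle_ineq]])
  have "0 \<le> B"
    by (rule weighted_norm_bound_nonneg[OF decay_a])
  have sum_a: "summable (\<lambda>k. s k *\<^sub>R a (k + m))" "norm (\<Sum>k. s k *\<^sub>R a (k + m)) \<le> (7 + 9*K1) * B"
    using summable_sin_scaleR[OF var_a decay_a x] norm_suminf_sin_scaleR_tail_le[OF var_a decay_a \<open>1 \<le> m\<close> x]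
      summable_iff_shift[of "\<lambda>k. sin (real k * x) *\<^sub>R a k" m] by (simp_all add: s_def)
  have sum_ab: "summable (\<lambda>k. s k *\<^sub>R (a (k + m) + b (k + m)))"
      "norm (\<Sum>k. s k *\<^sub>R (a (k + m) + b (k + m))) \<le> (7 + 9*K2) * B"
    using summable_sin_scaleR[OF var_ab decay_ab x] norm_suminf_sin_scaleR_tail_le[OF var_ab decay_ab \<open>1 \<le> m\<close> x]
      summable_iff_shift[of "\<lambda>k. sin (real k * x) *\<^sub>R (a k + b k)" m] by (simp_all add: s_def)
  have b_eq: "(\<lambda>k. s k *\<^sub>R b (k + m)) = (\<lambda>k. s k *\<^sub>R (a (k + m) + b (k + m)) - s k *\<^sub>R a (k + m))"
    by (simp add: algebra_simps)
  have sum_b: "summable (\<lambda>k. s k *\<^sub>R b (k + m))"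
    unfolding b_eq by (rule summable_diff[OF sum_ab(1) sum_a(1)])
  have "norm (\<Sum>k. s k *\<^sub>R b (k + m))
      \<le> norm (\<Sum>k. s k *\<^sub>R (a (k + m) + b (k + m))) + norm (\<Sum>k. s k *\<^sub>R a (k + m))"
    unfolding b_eq suminf_diff[OF sum_ab(1) sum_a(1), symmetric] by (rule norm_triangle_ineq4)
  moreover have "C * B = (7 + 9*K1) * B + (7 + 9*K2) * B"
    by (simp add: C_def algebra_simps)
  moreover have "0 \<le> (7 + 9*K1) * B" "0 \<le> (7 + 9*K2) * B"
    using \<open>0 \<le> B\<close> \<open>0 \<le> K1\<close> \<open>0 \<le> K2\<close> by simp_all
  ultimately show ?thesis
    unfolding s_def[symmetric] using sum_a sum_ab(2) sum_b by linarith
qed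

theorem lemma6:
  fixes c :: "int \<Rightarrow> complex" and f :: "real \<Rightarrow> complex"
  assumes "NBVS (\<lambda>n. c (int n))"
    and "NBVS (\<lambda>n. c (int n) + c (- int n))"
    and "\<And>x. (\<lambda>N. \<Sum>n=-int N..int N. c n * exp (\<i> * of_int n * of_real x)) \<longlonglongrightarrow> f x"
    and "f \<in> C2pi"
  shows "\<exists>K::real. \<forall>m::nat\<ge>1. \<forall>x\<in>{0..pi}.
           bdd_above ((\<lambda>k. real k * (norm (c (int k)) + norm (c (- int k)))) ` {m..}) \<longrightarrow>
           (summable (\<lambda>k. c (int (k + m)) * of_real (sin (real (k + m) * x))) \<and>
            norm (\<Sum>k. c (int (k + m)) * of_real (sin (real (k + m) * x)))
              \<le> K * (SUP k\<in>{m..}. real k * (norm (c (int k)) + norm (c (- int k)))) \<and>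
            summable (\<lambda>k. c (- int (k + m)) * of_real (sin (real (k + m) * x))) \<and>
            norm (\<Sum>k. c (- int (k + m)) * of_real (sin (real (k + m) * x)))
              \<le> K * (SUP k\<in>{m..}. real k * (norm (c (int k)) + norm (c (- int k)))))"
proof -
  obtain K1 where K1: "0 \<le> K1" "dyadic_variation_bounded K1 (\<lambda>n. c (int n))"
    using NBVS_imp_dyadic_variation_bounded[OF assms(1)] by blast
  obtain K2 where K2: "0 \<le> K2" "dyadic_variation_bounded K2 (\<lambda>n. c (int n) + c (- int n))"
    using NBVS_imp_dyadic_variation_bounded[OF assms(2)] by blast
  have mult_of_real_eq: "z * complex_of_real r = r *\<^sub>R z" for z r
    by (simp add: scaleR_conv_of_real)
  show ?thesis
    using sin_series_tails_le[of K1 "\<lambda>n. c (int n)" K2 "\<lambda>n. c (- int n)"] K1 K2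
    by (intro exI[of _ "(7 + 9*K1) + (7 + 9*K2)"]) (auto simp: mult_of_real_eq)
qed

end
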